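(* Over profiles whose ballots are strict weak orders (ties allowed), let $f$ be a VCCR satisfying Anonymity, Neutrality, Availability, Neutral Indifference, Monotonicity for two-candidate profiles (in particular, if it satisfies Monotonicity), Neutral Reversal, and Coherent IIA. Then $sc(\mathbf P)\supseteq f(\mathbf P)$ for every profile $\mathbf P$.
   Context: Profiles: $\mathbf P:V\to\mathcal W(X)$, $V$ nonempty finite set of voters, $X=X(\mathbf P)$ nonempty finite set of candidates (from fixed infinite sets), $\mathcal W(X)$ the strict weak orders on $X$ (irreflexive, transitive, negatively transitive; the empty relation, all tied, is allowed). "Ranks $x$ above $y$" means strictly. $\mathbf P_{|Y}$ restricts ballots to $Y$. $\mathrm{Margin}_{\mathbf P}(x,y)$ = #voters with $x$ strictly above $y$ minus #voters with $y$ strictly above $x$. $\mathcal M(\mathbf P)$: edges $x\to y$ weighted $\mathrm{Margin}_{\mathbf P}(x,y)$ when positive. Majority paths and strength (minimum consecutive margin) as usual. VCCR: $f(\mathbf P)$ asymmetric relation on $X(\mathbf P)$. $(x,y)\in sc(\mathbf P)$ iff $\mathrm{Margin}_{\mathbf P}(x,y)>0$ exceeds the strength of every majority path from $y$ to $x$. Moving up one place: for strict weak order $\succ$ on finite $X$ and $x$ not greatest, let $x'\ne x$ be $\succ$-minimal with $x\not\succ x'$; $\succ'$ results from moving $x$ up one place if it agrees with $\succ$ off $x$, and: if $x$ is tied with $x'$ in $\succ$ then in $\succ'$ $x$ is tied with nothing, $x\succ'x'$, and $y\succ x$ implies $y\succ'x$; if $x$ is tied with nothing in $\succ$, then $x$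 is tied with $x'$ in $\succ'$. Axioms: Anonymity (permuting which voter has which ballot, same voter set, leaves $f$ unchanged); Neutrality (if a bijection $\pi$ of candidates transforms $\mathbf P$ into $\mathbf P'$ ballot-wise, same voters and candidates, then $(x,y)\in f(\mathbf P)\iff(\pi x,\pi y)\in f(\mathbf P')$); Availability (some candidate is undefeated in every profile); Neutral Indifference (adding a voter with empty ballot leaves $f$ unchanged); Monotonicity (resp. for two-candidate profiles): moving $x$ up one place in one ballot of a (resp. two-candidate) profile preserves $(x,y)\in f(\cdot)$; Neutral Reversal (adding two voters with converse ballots leaves $f$ unchanged); Coherent IIA: with $\mathbf P\rightsquigarrow_{x,y}\mathbf P'$ meaning $\mathbf P_{|\{x,y\}}=\mathbf P'_{|\{x,y\}}$ and $\mathcal M(\mathbf P')$ obtainable from $\mathcal M(\mathbf P)$ by deleting zero or more candidates other than $x,y$ and deleting or reducing weights of zero or more edges not connecting $x,y$, $(x,y)\in f(\mathbf P)$ and $\mathbf P\rightsquigarrow_{x,y}\mathbf P'$ imply $(x,y)\in f(\mathbf P')$. *)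

theory Defs
  imports Main
begin

text \<open>A profile is a triple (V, X, P): a set of voters, a set of candidates,
  and the ballot of each voter (a strict relation on candidates, "a above b").
  Ballots of non-voters are required to be empty, so that profiles have a
  canonical representation.\<close>

type_synonym ('v, 'c) profile = "'v set \<times> 'c set \<times> ('v \<Rightarrow> 'c rel)"

definition voters :: "('v, 'c) profile \<Rightarrow> 'v set" where
  "voters P = fst P"

definition cands :: "('v, 'c) profile \<Rightarrow> 'c set" where
  "cands P = fst (snd P)"

definition ballot :: "('v, 'c) profile \<Rightarrow> 'v \<Rightarrow> 'c rel" where
  "ballot P = snd (snd P)"

definition strict_weak_order :: "'c set \<Rightarrow> 'c rel \<Rightarrow> bool" where
  "strict_weak_order X R \<longleftrightarrow>
     R \<subseteq> X \<times> X \<and>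
     (\<forall>x\<in>X. (x, x) \<notin> R) \<and>
     (\<forall>x\<in>X. \<forall>y\<in>X. \<forall>z\<in>X. (x, y) \<in> R \<longrightarrow> (y, z) \<in> R \<longrightarrow> (x, z) \<in> R) \<and>
     (\<forall>x\<in>X. \<forall>y\<in>X. \<forall>z\<in>X. (x, z) \<notin> R \<longrightarrow> (z, y) \<notin> R \<longrightarrow> (x, y) \<notin> R)"

definition is_profile :: "('v, 'c) profile \<Rightarrow> bool" where
  "is_profile P \<longleftrightarrow>
     finite (voters P) \<and> voters P \<noteq> {} \<and> finite (cands P) \<and> cands P \<noteq> {} \<and>
     (\<forall>v\<in>voters P. strict_weak_order (cands P) (ballot P v)) \<and>
     (\<forall>v. v \<notin> voters P \<longrightarrow> ballot P v = {})"

definition margin :: "('v, 'c) profile \<Rightarrow> 'c \<Rightarrow> 'c \<Rightarrow> int" where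
  "margin P x y =
     int (card {v \<in> voters P. (x, y) \<in> ballot P v}) - int (card {v \<in> voters P. (y, x) \<in> ballot P v})"

definition majority_path :: "('v, 'c) profile \<Rightarrow> 'c list \<Rightarrow> bool" where
  "majority_path P xs \<longleftrightarrow>
     length xs \<ge> 2 \<and> set xs \<subseteq> cands P \<and>
     (\<forall>i. Suc i < length xs \<longrightarrow> margin P (xs ! i) (xs ! Suc i) > 0)"

definition path_strength :: "('v, 'c) profile \<Rightarrow> 'c list \<Rightarrow> int" where
  "path_strength P xs = Min {margin P (xs ! i) (xs ! Suc i) | i. Suc i < length xs}"

definition split_cycle :: "('v, 'c) profile \<Rightarrow> 'c rel" where
  "split_cycle P = {(x, y). x \<in> cands P \<and> y \<in> cands P \<and> margin P x y > 0 \<and>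
     (\<forall>xs. majority_path P xs \<and> hd xs = y \<and> last xs = x \<longrightarrow> margin P x y > path_strength P xs)}"

definition is_vccr :: "(('v, 'c) profile \<Rightarrow> 'c rel) \<Rightarrow> bool" where
  "is_vccr f \<longleftrightarrow> (\<forall>P. is_profile P \<longrightarrow>
     f P \<subseteq> cands P \<times> cands P \<and> (\<forall>x y. (x, y) \<in> f P \<longrightarrow> (y, x) \<notin> f P))"

definition anonymity :: "(('v, 'c) profile \<Rightarrow> 'c rel) \<Rightarrow> bool" where
  "anonymity f \<longleftrightarrow> (\<forall>P \<pi>. is_profile P \<longrightarrow> bij_betw \<pi> (voters P) (voters P) \<longrightarrow>
     f (voters P, cands P, \<lambda>v. if v \<in> voters P then ballot P (\<pi> v) else {}) = f P)"

definition neutrality :: "(('v, 'c) profile \<Rightarrow> 'c rel) \<Rightarrow> bool" where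
  "neutrality f \<longleftrightarrow> (\<forall>P \<pi>. is_profile P \<longrightarrow> bij_betw \<pi> (cands P) (cands P) \<longrightarrow>
     (\<forall>x\<in>cands P. \<forall>y\<in>cands P.
        (x, y) \<in> f P \<longleftrightarrow>
        (\<pi> x, \<pi> y) \<in> f (voters P, cands P, \<lambda>v. {(\<pi> a, \<pi> b) | a b. (a, b) \<in> ballot P v})))"

definition availability :: "(('v, 'c) profile \<Rightarrow> 'c rel) \<Rightarrow> bool" where
  "availability f \<longleftrightarrow> (\<forall>P. is_profile P \<longrightarrow> (\<exists>x\<in>cands P. \<forall>y. (y, x) \<notin> f P))"

definition neutral_indifference :: "(('v, 'c) profile \<Rightarrow> 'c rel) \<Rightarrow> bool" where
  "neutral_indifference f \<longleftrightarrow> (\<forall>P i. is_profile P \<longrightarrow> i \<notin> voters P \<longrightarrow>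
     f (insert i (voters P), cands P, (ballot P)(i := {})) = f P)"

text \<open>\<open>R'\<close> results from \<open>R\<close> (a strict weak order on \<open>X\<close>) by moving \<open>x\<close> up one place.
  "Tied" means: distinct and neither is strictly above the other.\<close>

definition tied :: "'c rel \<Rightarrow> 'c \<Rightarrow> 'c \<Rightarrow> bool" where
  "tied R a b \<longleftrightarrow> a \<noteq> b \<and> (a, b) \<notin> R \<and> (b, a) \<notin> R"

definition move_up_one :: "'c set \<Rightarrow> 'c rel \<Rightarrow> 'c \<Rightarrow> 'c rel \<Rightarrow> bool" where
  "move_up_one X R x R' \<longleftrightarrow>
     x \<in> X \<and> strict_weak_order X R \<and> strict_weak_order X R' \<and>
     (\<forall>a\<in>X. \<forall>b\<in>X. a \<noteq> x \<longrightarrow> b \<noteq> x \<longrightarrow> ((a, b) \<in> R' \<longleftrightarrow> (a, b) \<in> R)) \<and>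
     (\<exists>x'\<in>X. x' \<noteq> x \<and> (x, x') \<notin> R \<and>
        (\<forall>z\<in>X. z \<noteq> x \<longrightarrow> (x, z) \<notin> R \<longrightarrow> (x', z) \<notin> R) \<and>
        (tied R x x' \<longrightarrow>
           (\<forall>z\<in>X. \<not> tied R' x z) \<and> (x, x') \<in> R' \<and> (\<forall>y\<in>X. (y, x) \<in> R \<longrightarrow> (y, x) \<in> R')) \<and>
        ((\<forall>z\<in>X. \<not> tied R x z) \<longrightarrow> tied R' x x'))"

definition monotonicity_two :: "(('v, 'c) profile \<Rightarrow> 'c rel) \<Rightarrow> bool" where
  "monotonicity_two f \<longleftrightarrow> (\<forall>P i x y R'. is_profile P \<longrightarrow> card (cands P) = 2 \<longrightarrow>
     i \<in> voters P \<longrightarrow> move_up_one (cands P) (ballot P i) x R' \<longrightarrow> (x, y) \<in> f P \<longrightarrow>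
     (x, y) \<in> f (voters P, cands P, (ballot P)(i := R')))"

definition neutral_reversal :: "(('v, 'c) profile \<Rightarrow> 'c rel) \<Rightarrow> bool" where
  "neutral_reversal f \<longleftrightarrow> (\<forall>P i j R. is_profile P \<longrightarrow> i \<notin> voters P \<longrightarrow> j \<notin> voters P \<longrightarrow>
     i \<noteq> j \<longrightarrow> strict_weak_order (cands P) R \<longrightarrow>
     f (insert i (insert j (voters P)), cands P, (ballot P)(i := R, j := R\<inverse>)) = f P)"

definition restrict_profile :: "('v, 'c) profile \<Rightarrow> 'c set \<Rightarrow> ('v, 'c) profile" where
  "restrict_profile P Y = (voters P, cands P \<inter> Y, \<lambda>v. ballot P v \<inter> (Y \<times> Y))"

definition coherent_step :: "('v, 'c) profile \<Rightarrow> 'c \<Rightarrow> 'c \<Rightarrow> ('v, 'c) profile \<Rightarrow> bool" where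
  "coherent_step P x y P' \<longleftrightarrow>
     restrict_profile P {x, y} = restrict_profile P' {x, y} \<and>
     cands P' \<subseteq> cands P \<and> x \<in> cands P' \<and> y \<in> cands P' \<and>
     (\<forall>a\<in>cands P'. \<forall>b\<in>cands P'. margin P' a b > 0 \<longrightarrow>
        margin P a b > 0 \<and> margin P' a b \<le> margin P a b \<and>
        ({a, b} = {x, y} \<longrightarrow> margin P' a b = margin P a b))"

definition coherent_IIA :: "(('v, 'c) profile \<Rightarrow> 'c rel) \<Rightarrow> bool" where
  "coherent_IIA f \<longleftrightarrow> (\<forall>P P' x y. is_profile P \<longrightarrow> is_profile P' \<longrightarrow>
     (x, y) \<in> f P \<longrightarrow> coherent_step P x y P' \<longrightarrow> (x, y) \<in> f P')"

end

theory Submission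
  imports Defs "HOL-Library.Transitive_Closure_Table" "HOL-Combinatorics.Cycles"
begin

(* Let x defeat y in P and let m be the margin of x over y.  Coherent IIA passes the defeat to the
   restriction of P to {x, y}; there Monotonicity lets x climb until the margin is zero, where
   Anonymity and Neutrality would let y defeat x as well, so m > 0.  If some majority path from y
   to x had strength at least m, it would contain a simple cycle x -> y -> ... -> x all of whose
   edges have margin at least m.  Take a profile S on fresh voters whose majority graph is exactly
   this cycle with all weights m.  Adding abstainers and pairs of mutually reversed ballots, which
   by Neutral Indifference and Neutral Reversal changes neither the defeats nor the margins, makes P
   and S agree voter by voter on {x, y}, so Coherent IIA carries the defeat of y by x over to S.
   But S is invariant under rotating the cycle, so by Neutrality and Anonymity every candidate of S
   is defeated, contradicting Availability. *)

section \<open>Profiles, ballots and margins\<close>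

lemma profile_sel [simp]:
  "voters (V, X, b) = V" "cands (V, X, b) = X" "ballot (V, X, b) = b"
  by (simp_all add: voters_def cands_def ballot_def)

lemma profile_eqI: "voters P = voters Q \<Longrightarrow> cands P = cands Q \<Longrightarrow> ballot P = ballot Q \<Longrightarrow> P = Q"
  by (simp add: voters_def cands_def ballot_def prod_eq_iff)

lemma profile_eta [simp]: "(voters P, cands P, ballot P) = P"
  by (simp add: voters_def cands_def ballot_def)

lemma is_profileD:
  assumes "is_profile P"
  shows "finite (voters P)" "voters P \<noteq> {}" "finite (cands P)" "cands P \<noteq> {}"
    and "v \<in> voters P \<Longrightarrow> strict_weak_order (cands P) (ballot P v)"
    and "v \<notin> voters P \<Longrightarrow> ballot P v = {}"
  using assms unfolding is_profile_def by auto

lemma is_vccrD: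
  assumes "is_vccr f" "is_profile P" "(a, b) \<in> f P"
  shows "a \<in> cands P \<and> b \<in> cands P" "(b, a) \<notin> f P"
  using assms unfolding is_vccr_def by blast+

lemma strict_weak_order_empty [simp]: "strict_weak_order X {}"
  unfolding strict_weak_order_def by auto

lemma strict_weak_order_converse: "strict_weak_order X R \<Longrightarrow> strict_weak_order X (R\<inverse>)"
  unfolding strict_weak_order_def by blast

lemma strict_weak_order_irrefl: "strict_weak_order X R \<Longrightarrow> (a, a) \<notin> R"
  unfolding strict_weak_order_def by blast

lemma strict_weak_order_asym: "strict_weak_order X R \<Longrightarrow> (a, b) \<in> R \<Longrightarrow> (b, a) \<notin> R"
  unfolding strict_weak_order_def by blast

lemma strict_weak_order_restrict:
  "strict_weak_order X R \<Longrightarrow> strict_weak_order (X \<inter> Y) (Restr R Y)"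
  unfolding strict_weak_order_def by blast

definition score_ballot :: "'c set \<Rightarrow> ('c \<Rightarrow> int) \<Rightarrow> 'c rel" where
  "score_ballot X h = {(a, b). a \<in> X \<and> b \<in> X \<and> h b < h a}"

lemma strict_weak_order_score_ballot: "strict_weak_order X (score_ballot X h)"
  unfolding strict_weak_order_def score_ballot_def by auto

lemma map_prod_score_ballot:
  assumes \<pi>: "bij_betw \<pi> X X" and h': "\<And>z. z \<in> X \<Longrightarrow> h' (\<pi> z) = h z"
  shows "map_prod \<pi> \<pi> ` score_ballot X h = score_ballot X h'"
proof (intro equalityI subsetI)
  fix p assume "p \<in> map_prod \<pi> \<pi> ` score_ballot X h"
  then obtain a b where "p = (\<pi> a, \<pi> b)" "a \<in> X" "b \<in> X" "h b < h a"
    unfolding score_ballot_def by auto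
  then show "p \<in> score_ballot X h'"
    using h' bij_betw_apply[OF \<pi>] unfolding score_ballot_def by simp
next
  fix p assume "p \<in> score_ballot X h'"
  then obtain a b where p: "p = (a, b)" "a \<in> X" "b \<in> X" "h' b < h' a"
    unfolding score_ballot_def by auto
  moreover obtain a' b' where "a' \<in> X" "b' \<in> X" "a = \<pi> a'" "b = \<pi> b'"
    using p(2,3) bij_betw_imp_surj_on[OF \<pi>] by (metis imageE)
  ultimately show "p \<in> map_prod \<pi> \<pi> ` score_ballot X h"
    using h' unfolding score_ballot_def by force
qed

definition top_ballot :: "'c set \<Rightarrow> 'c \<Rightarrow> 'c rel" where
  "top_ballot X a = score_ballot X (\<lambda>z. of_bool (z = a))"

lemma top_ballot_iff: "(u, w) \<in> top_ballot X a \<longleftrightarrow> u = a \<and> a \<in> X \<and> w \<in> X \<and> w \<noteq> a"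
  by (auto simp: top_ballot_def score_ballot_def)

lemma strict_weak_order_top_ballot: "strict_weak_order X (top_ballot X a)"
  unfolding top_ballot_def by (rule strict_weak_order_score_ballot)

definition ballot_margin :: "'c rel \<Rightarrow> 'c \<Rightarrow> 'c \<Rightarrow> int" where
  "ballot_margin R a b = of_bool ((a, b) \<in> R) - of_bool ((b, a) \<in> R)"

lemma ballot_margin_empty [simp]: "ballot_margin {} a b = 0"
  by (simp add: ballot_margin_def)

lemma ballot_margin_converse [simp]: "ballot_margin (R\<inverse>) a b = - ballot_margin R a b"
  by (simp add: ballot_margin_def)

lemma ballot_margin_Restr: "a \<in> Y \<Longrightarrow> b \<in> Y \<Longrightarrow> ballot_margin (Restr R Y) a b = ballot_margin R a b"
  by (simp add: ballot_margin_def)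

lemma Restr_pair_eqI:
  assumes "strict_weak_order X R" "strict_weak_order X' R'"
    and "(x, y) \<in> R \<longleftrightarrow> (x, y) \<in> R'" "(y, x) \<in> R \<longleftrightarrow> (y, x) \<in> R'"
  shows "Restr R {x, y} = Restr R' {x, y}"
  using assms strict_weak_order_irrefl[OF assms(1)] strict_weak_order_irrefl[OF assms(2)] by auto

lemma margin_eq_sum:
  assumes "finite (voters P)"
  shows "margin P a b = (\<Sum>v\<in>voters P. ballot_margin (ballot P v) a b)"
  using assms by (simp add: margin_def ballot_margin_def sum_subtractf Collect_conj_eq Int_commute)

lemma margin_antisym: "margin P a b = - margin P b a"
  unfolding margin_def by simp

lemma margin_insert_voter:
  assumes "finite V" "i \<notin> V"
  shows "margin (insert i V, X, b(i := R)) a c = margin (V, X, b) a c + ballot_margin R a c"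
proof -
  have "margin (insert i V, X, b(i := R)) a c =
      ballot_margin R a c + (\<Sum>v\<in>V. ballot_margin ((b(i := R)) v) a c)"
    using assms by (simp add: margin_eq_sum)
  also have "(\<Sum>v\<in>V. ballot_margin ((b(i := R)) v) a c) = margin (V, X, b) a c"
    using assms by (auto simp: margin_eq_sum intro: sum.cong)
  finally show ?thesis by (simp add: fun_upd_def)
qed

lemma margin_update_ballot:
  assumes "finite (voters Q)" "i \<in> voters Q"
  shows "margin (voters Q, cands Q, (ballot Q)(i := R)) a b =
    margin Q a b - ballot_margin (ballot Q i) a b + ballot_margin R a b"
proof -
  define V where "V = voters Q - {i}"
  have V: "insert i V = voters Q" "finite V" "i \<notin> V" using assms unfolding V_def by auto
  have "margin Q a b = margin (insert i V, cands Q, (ballot Q)(i := ballot Q i)) a b"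
    by (simp add: V(1))
  also have "\<dots> = margin (V, cands Q, ballot Q) a b + ballot_margin (ballot Q i) a b"
    by (rule margin_insert_voter[OF V(2,3)])
  finally show ?thesis using margin_insert_voter[OF V(2,3), of "cands Q" "ballot Q" R] by (simp add: V(1))
qed

lemma margin_restrict_profile:
  assumes "a \<in> Y" "b \<in> Y"
  shows "margin (restrict_profile P Y) a b = margin P a b"
  using assms unfolding margin_def restrict_profile_def by simp

lemma margin_eq_if_restrict_eq:
  assumes "restrict_profile P Y = restrict_profile Q Y" "a \<in> Y" "b \<in> Y"
  shows "margin P a b = margin Q a b"
  by (metis assms margin_restrict_profile)

lemma restrict_profile_idem: "restrict_profile (restrict_profile P Y) Y = restrict_profile P Y"
  by (simp add: restrict_profile_def Int_assoc)

lemma is_profile_restrict_profile: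
  assumes "is_profile P" "cands P \<inter> Y \<noteq> {}"
  shows "is_profile (restrict_profile P Y)"
  using assms unfolding is_profile_def restrict_profile_def by (simp add: strict_weak_order_restrict)

lemma obtain_fresh_injection:
  assumes "infinite (UNIV :: 'v set)" "finite V" "finite J"
  obtains g :: "'i \<Rightarrow> 'v" where "inj_on g J" "g ` J \<inter> V = {}"
proof -
  have "infinite (UNIV - V)" using assms(1,2) by (rule Diff_infinite_finite[rotated])
  then obtain F where F: "finite F" "card F = card J" "F \<subseteq> UNIV - V"
    using infinite_arbitrarily_large by metis
  then obtain g where "bij_betw g J F" using finite_same_card_bij[OF assms(3)] by metis
  with F(3) show thesis by (intro that) (auto simp: bij_betw_def)
qed

section \<open>Symmetric profiles\<close>

lemma defeat_symmetric_image:
  assumes an: "anonymity f" and ne: "neutrality f" and Q: "is_profile Q"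
    and \<pi>: "bij_betw \<pi> (cands Q) (cands Q)" and \<sigma>: "bij_betw \<sigma> (voters Q) (voters Q)"
    and sym: "\<And>v. v \<in> voters Q \<Longrightarrow> ballot Q (\<sigma> v) = map_prod \<pi> \<pi> ` ballot Q v"
    and ab: "(a, b) \<in> f Q" "a \<in> cands Q" "b \<in> cands Q"
  shows "(\<pi> a, \<pi> b) \<in> f Q"
proof -
  have "(\<pi> a, \<pi> b) \<in> f (voters Q, cands Q, \<lambda>v. {(\<pi> a, \<pi> b) | a b. (a, b) \<in> ballot Q v})"
    using ne Q \<pi> ab unfolding neutrality_def by blast
  also have "(\<lambda>v. {(\<pi> a, \<pi> b) | a b. (a, b) \<in> ballot Q v}) =
      (\<lambda>v. if v \<in> voters Q then ballot Q (\<sigma> v) else {})"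
    using sym is_profileD(6)[OF Q] by (auto simp: fun_eq_iff)
  also have "f (voters Q, cands Q, \<lambda>v. if v \<in> voters Q then ballot Q (\<sigma> v) else {}) = f Q"
    using an Q \<sigma> unfolding anonymity_def by blast
  finally show ?thesis .
qed

lemma symmetric_cycle_violates_availability:
  assumes an: "anonymity f" and ne: "neutrality f" and av: "availability f" and Q: "is_profile Q"
    and \<pi>: "bij_betw \<pi> (cands Q) (cands Q)" and \<sigma>: "bij_betw \<sigma> (voters Q) (voters Q)"
    and sym: "\<And>v. v \<in> voters Q \<Longrightarrow> ballot Q (\<sigma> v) = map_prod \<pi> \<pi> ` ballot Q v"
    and a: "a \<in> cands Q" "(a, \<pi> a) \<in> f Q"
    and orbit: "\<And>c. c \<in> cands Q \<Longrightarrow> \<exists>k. c = (\<pi> ^^ k) a"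
  shows False
proof -
  have defeats: "(\<pi> ^^ k) a \<in> cands Q \<and> ((\<pi> ^^ k) a, (\<pi> ^^ Suc k) a) \<in> f Q" for k
  proof (induction k)
    case (Suc k)
    then show ?case
      using defeat_symmetric_image[OF an ne Q \<pi> \<sigma> sym] bij_betw_apply[OF \<pi>] by simp
  qed (simp add: a)
  obtain c where c: "c \<in> cands Q" "\<forall>d. (d, c) \<notin> f Q"
    using av Q unfolding availability_def by blast
  obtain d where "d \<in> cands Q" "c = \<pi> d"
    using c(1) bij_betw_imp_surj_on[OF \<pi>] by (metis imageE)
  with orbit defeats c(2) show False by (metis funpow.simps(2) o_apply)
qed

section \<open>Two candidates\<close>

lemma two_candidate_ballot:
  assumes "strict_weak_order {x, y} R"
  shows "R = (if (x, y) \<in> R then {(x, y)} else if (y, x) \<in> R then {(y, x)} else {})"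
proof -
  have "R \<subseteq> {(x, y), (y, x)}"
    using assms strict_weak_order_irrefl[OF assms] unfolding strict_weak_order_def by auto
  then show ?thesis using strict_weak_order_asym[OF assms] by auto
qed

lemma obtain_swap_involution:
  assumes "finite A" "finite B" "card A = card B" "A \<inter> B = {}"
  obtains \<sigma> where "\<And>v. v \<in> A \<Longrightarrow> \<sigma> v \<in> B" "\<And>v. v \<in> B \<Longrightarrow> \<sigma> v \<in> A"
    "\<And>v. v \<notin> A \<Longrightarrow> v \<notin> B \<Longrightarrow> \<sigma> v = v" "\<And>v. \<sigma> (\<sigma> v) = v"
proof -
  obtain h where h: "bij_betw h A B" using finite_same_card_bij assms(1-3) by blast
  define \<sigma> where "\<sigma> v = (if v \<in> A then h v else if v \<in> B then inv_into A h v else v)" for v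
  show thesis
  proof (rule that)
    show "\<sigma> v \<in> B" if "v \<in> A" for v using h that unfolding \<sigma>_def bij_betw_def by auto
    show "\<sigma> v \<in> A" if "v \<in> B" for v
      using h that assms(4) unfolding \<sigma>_def bij_betw_def by (auto simp: inv_into_into)
    show "\<sigma> v = v" if "v \<notin> A" "v \<notin> B" for v using that unfolding \<sigma>_def by simp
    show "\<sigma> (\<sigma> v) = v" for v
      using h assms(4) unfolding \<sigma>_def bij_betw_def by (auto simp: inv_into_into f_inv_into_f)
  qed
qed

lemma two_candidate_tie:
  assumes vccr: "is_vccr f" and an: "anonymity f" and ne: "neutrality f"
    and Q: "is_profile Q" "cands Q = {x, y}" "x \<noteq> y" and tie: "margin Q x y = 0"
  shows "(x, y) \<notin> f Q"
proof
  assume fQ: "(x, y) \<in> f Q"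
  define Fw where "Fw = {v \<in> voters Q. (x, y) \<in> ballot Q v}"
  define Bw where "Bw = {v \<in> voters Q. (y, x) \<in> ballot Q v}"
  have ballot: "ballot Q v = (if v \<in> Fw then {(x, y)} else if v \<in> Bw then {(y, x)} else {})"
    if v: "v \<in> voters Q" for v
  proof -
    have "ballot Q v = (if (x, y) \<in> ballot Q v then {(x, y)} else if (y, x) \<in> ballot Q v then {(y, x)} else {})"
      using two_candidate_ballot is_profileD(5)[OF Q(1) v] Q(2) by metis
    also have "\<dots> = (if v \<in> Fw then {(x, y)} else if v \<in> Bw then {(y, x)} else {})"
      using v unfolding Fw_def Bw_def by simp
    finally show ?thesis .
  qed
  have disj: "Fw \<inter> Bw = {}"
  proof -
    have "(y, x) \<notin> ballot Q v" if "v \<in> Fw" for v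
      using that strict_weak_order_asym[OF is_profileD(5)[OF Q(1)], of v x y] unfolding Fw_def by simp
    then show ?thesis unfolding Bw_def by blast
  qed
  have "card Fw = card Bw" using tie unfolding margin_def Fw_def Bw_def by simp
  moreover have "finite Fw" "finite Bw" using is_profileD(1)[OF Q(1)] unfolding Fw_def Bw_def by simp_all
  (* Swapping the voters ranking x above y with the equally many ranking y above x, together with
     the transposition of x and y, is a symmetry of Q. *)
  ultimately obtain \<sigma> where \<sigma>_Fw: "\<And>v. v \<in> Fw \<Longrightarrow> \<sigma> v \<in> Bw" and \<sigma>_Bw: "\<And>v. v \<in> Bw \<Longrightarrow> \<sigma> v \<in> Fw"
    and \<sigma>_other: "\<And>v. v \<notin> Fw \<Longrightarrow> v \<notin> Bw \<Longrightarrow> \<sigma> v = v" and \<sigma>_invol: "\<And>v. \<sigma> (\<sigma> v) = v"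
    using obtain_swap_involution disj by metis
  have FB: "Fw \<subseteq> voters Q" "Bw \<subseteq> voters Q" unfolding Fw_def Bw_def by auto
  have "\<sigma> v \<in> voters Q" if "v \<in> voters Q" for v
    using \<sigma>_Fw[of v] \<sigma>_Bw[of v] \<sigma>_other[of v] FB that by (cases "v \<in> Fw"; cases "v \<in> Bw") auto
  then have \<sigma>: "bij_betw \<sigma> (voters Q) (voters Q)"
    using \<sigma>_invol by (intro bij_betw_byWitness[where f' = \<sigma>]) auto
  let ?\<tau> = "transpose x y"
  have \<tau>: "bij_betw ?\<tau> (cands Q) (cands Q)" unfolding Q(2) by (rule bij_betw_transpose_iff) simp
  have "ballot Q (\<sigma> v) = map_prod ?\<tau> ?\<tau> ` ballot Q v" if "v \<in> voters Q" for v
    using \<sigma>_Fw \<sigma>_Bw \<sigma>_other FB ballot[OF that] ballot[OF bij_betw_apply[OF \<sigma> that]] disj Q(3)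
    by (auto simp: transpose_def)
  then have "(?\<tau> x, ?\<tau> y) \<in> f Q"
    using defeat_symmetric_image[OF an ne Q(1) \<tau> \<sigma> _ fQ] Q(2) by blast
  with is_vccrD(2)[OF vccr Q(1) fQ] show False by simp
qed

lemma move_up_one_to_tie: "x \<noteq> y \<Longrightarrow> move_up_one {x, y} {(y, x)} x {}"
  unfolding move_up_one_def tied_def strict_weak_order_def by auto

lemma two_candidate_nonpositive_margin:
  assumes vccr: "is_vccr f" and an: "anonymity f" and ne: "neutrality f" and mo: "monotonicity_two f"
    and Q: "is_profile Q" "cands Q = {x, y}" "x \<noteq> y" and margin: "margin Q x y = - int k"
  shows "(x, y) \<notin> f Q"
  using Q margin
proof (induction k arbitrary: Q)
  case 0
  then show ?case using two_candidate_tie[OF vccr an ne, of Q x y] by simp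
next
  case (Suc k)
  have "0 < card {v \<in> voters Q. (y, x) \<in> ballot Q v}"
    using Suc.prems(4) unfolding margin_def by linarith
  then have "{v \<in> voters Q. (y, x) \<in> ballot Q v} \<noteq> {}" using card_gt_0_iff by blast
  then obtain i where i: "i \<in> voters Q" "(y, x) \<in> ballot Q i" by blast
  have swo_i: "strict_weak_order {x, y} (ballot Q i)"
    using is_profileD(5)[OF Suc.prems(1) i(1)] Suc.prems(2) by simp
  have "ballot Q i = {(y, x)}"
    using two_candidate_ballot[OF swo_i] i(2) strict_weak_order_asym[OF swo_i i(2)] by simp
  then have move: "move_up_one (cands Q) (ballot Q i) x {}"
    using move_up_one_to_tie[OF Suc.prems(3)] Suc.prems(2) by simp
  define Q' where "Q' = (voters Q, cands Q, (ballot Q)(i := {}))"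
  have "is_profile Q'" using Suc.prems(1) unfolding Q'_def is_profile_def by auto
  moreover have "margin Q' x y = - int k"
    using margin_update_ballot[OF is_profileD(1)[OF Suc.prems(1)] i(1)] Suc.prems(3,4)
      \<open>ballot Q i = {(y, x)}\<close> unfolding Q'_def by (simp add: ballot_margin_def)
  ultimately have "(x, y) \<notin> f Q'" using Suc.IH Suc.prems(2,3) unfolding Q'_def by simp
  moreover have "card (cands Q) = 2" using Suc.prems(2,3) by simp
  ultimately show ?case
    using mo Suc.prems(1) i(1) move unfolding monotonicity_two_def Q'_def by blast
qed

lemma two_candidate_margin_pos:
  assumes vccr: "is_vccr f" and an: "anonymity f" and ne: "neutrality f" and mo: "monotonicity_two f"
    and Q: "is_profile Q" "cands Q = {x, y}" "x \<noteq> y" and fQ: "(x, y) \<in> f Q"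
  shows "0 < margin Q x y"
proof (rule ccontr)
  assume "\<not> 0 < margin Q x y"
  then have "margin Q x y = - int (nat (- margin Q x y))" by simp
  from two_candidate_nonpositive_margin[OF vccr an ne mo Q this] fQ show False by simp
qed

lemma defeat_implies_positive_margin:
  assumes vccr: "is_vccr f" and an: "anonymity f" and ne: "neutrality f" and mo: "monotonicity_two f"
    and ci: "coherent_IIA f" and P: "is_profile P" and fP: "(x, y) \<in> f P"
  shows "0 < margin P x y"
proof -
  have xy: "x \<in> cands P" "y \<in> cands P" "x \<noteq> y"
    using is_vccrD[OF vccr P fP] fP by auto
  define Q where "Q = restrict_profile P {x, y}"
  have Q: "is_profile Q" "cands Q = {x, y}"
    using is_profile_restrict_profile[OF P, of "{x, y}"] xy unfolding Q_def
    by (auto simp: restrict_profile_def)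
  have margin_Q: "margin Q a b = margin P a b" if "a \<in> {x, y}" "b \<in> {x, y}" for a b
    using margin_restrict_profile[OF that] unfolding Q_def .
  have "coherent_step P x y Q"
    unfolding coherent_step_def using xy Q(2) margin_Q by (auto simp: Q_def restrict_profile_idem)
  with ci P Q(1) fP have "(x, y) \<in> f Q" unfolding coherent_IIA_def by blast
  with two_candidate_margin_pos[OF vccr an ne mo Q xy(3)] margin_Q show ?thesis by simp
qed

section \<open>Neutral extensions and Coherent IIA\<close>

inductive neutral_extension :: "('v, 'c) profile \<Rightarrow> ('v, 'c) profile \<Rightarrow> bool" for Q where
  neutral_extension_refl: "neutral_extension Q Q"
| add_abstainer: "neutral_extension Q Q' \<Longrightarrow> i \<notin> voters Q' \<Longrightarrow>
    neutral_extension Q (insert i (voters Q'), cands Q', (ballot Q')(i := {}))"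
| add_reversed_pair: "neutral_extension Q Q' \<Longrightarrow> i \<notin> voters Q' \<Longrightarrow> j \<notin> voters Q' \<Longrightarrow> i \<noteq> j \<Longrightarrow>
    strict_weak_order (cands Q') R \<Longrightarrow>
    neutral_extension Q (insert i (insert j (voters Q')), cands Q', (ballot Q')(i := R, j := R\<inverse>))"

lemma neutral_extension_cands: "neutral_extension Q Q' \<Longrightarrow> cands Q' = cands Q"
  by (induction rule: neutral_extension.induct) simp_all

lemma neutral_extension_is_profile: "neutral_extension Q Q' \<Longrightarrow> is_profile Q \<Longrightarrow> is_profile Q'"
  by (induction rule: neutral_extension.induct) (auto simp: is_profile_def strict_weak_order_converse)

lemma f_neutral_extension:
  assumes ni: "neutral_indifference f" and nr: "neutral_reversal f" and Q: "is_profile Q"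
  shows "neutral_extension Q Q' \<Longrightarrow> f Q' = f Q"
proof (induction rule: neutral_extension.induct)
  case (add_abstainer Q' i)
  have "is_profile Q'" using add_abstainer.hyps(1) Q by (rule neutral_extension_is_profile)
  with ni add_abstainer.hyps(2) have "f (insert i (voters Q'), cands Q', (ballot Q')(i := {})) = f Q'"
    unfolding neutral_indifference_def by blast
  with add_abstainer.IH show ?case by simp
next
  case (add_reversed_pair Q' i j R)
  have "is_profile Q'" using add_reversed_pair.hyps(1) Q by (rule neutral_extension_is_profile)
  with nr add_reversed_pair.hyps(2-5)
  have "f (insert i (insert j (voters Q')), cands Q', (ballot Q')(i := R, j := R\<inverse>)) = f Q'"
    unfolding neutral_reversal_def by blast
  with add_reversed_pair.IH show ?case by simp
qed simp

lemma margin_neutral_extension: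
  assumes Q: "is_profile Q"
  shows "neutral_extension Q Q' \<Longrightarrow> margin Q' = margin Q"
proof (induction rule: neutral_extension.induct)
  case (add_abstainer Q' i)
  have fin: "finite (voters Q')"
    using neutral_extension_is_profile[OF add_abstainer.hyps(1) Q] by (rule is_profileD)
  have "margin (insert i (voters Q'), cands Q', (ballot Q')(i := {})) a b = margin Q' a b" for a b
    using margin_insert_voter[OF fin add_abstainer.hyps(2), of "cands Q'" "ballot Q'" "{}"] by simp
  with add_abstainer.IH show ?case by (simp add: fun_eq_iff)
next
  case (add_reversed_pair Q' i j R)
  have fin: "finite (voters Q')"
    using neutral_extension_is_profile[OF add_reversed_pair.hyps(1) Q] by (rule is_profileD)
  have "(ballot Q')(i := R, j := R\<inverse>) = ((ballot Q')(j := R\<inverse>))(i := R)"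
    using add_reversed_pair.hyps(4) by (rule fun_upd_twist)
  moreover have i: "i \<notin> insert j (voters Q')" and fin': "finite (insert j (voters Q'))"
    using add_reversed_pair.hyps(2,4) fin by auto
  ultimately have "margin (insert i (insert j (voters Q')), cands Q', (ballot Q')(i := R, j := R\<inverse>)) a b =
      margin Q' a b" for a b
    using margin_insert_voter[OF fin' i, of "cands Q'" "(ballot Q')(j := R\<inverse>)" R]
      margin_insert_voter[OF fin add_reversed_pair.hyps(3), of "cands Q'" "ballot Q'" "R\<inverse>"] by simp
  with add_reversed_pair.IH show ?case by (simp add: fun_eq_iff)
qed simp

definition remove_voters :: "('v, 'c) profile \<Rightarrow> 'v set \<Rightarrow> ('v, 'c) profile" where
  "remove_voters Q D = (voters Q - D, cands Q, \<lambda>u. if u \<in> D then {} else ballot Q u)"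

lemma remove_voters_sel [simp]:
  "voters (remove_voters Q D) = voters Q - D" "cands (remove_voters Q D) = cands Q"
  "ballot (remove_voters Q D) u = (if u \<in> D then {} else ballot Q u)"
  by (simp_all add: remove_voters_def)

lemma is_profile_remove_voters:
  assumes "is_profile Q" "\<not> voters Q \<subseteq> D"
  shows "is_profile (remove_voters Q D)"
  using assms unfolding is_profile_def remove_voters_def by auto

lemma readd_abstainer:
  assumes "neutral_extension Q (remove_voters Q' {e})" "e \<in> voters Q'" "ballot Q' e = {}"
  shows "neutral_extension Q Q'"
proof -
  let ?Q = "remove_voters Q' {e}"
  have "Q' = (insert e (voters ?Q), cands ?Q, (ballot ?Q)(e := {}))"
    using assms(2,3) by (intro profile_eqI) (auto simp: fun_eq_iff)
  then show ?thesis using add_abstainer[OF assms(1), of e] by simp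
qed

lemma readd_reversed_pair:
  assumes "neutral_extension Q (remove_voters Q' {a, b})" "a \<in> voters Q'" "b \<in> voters Q'" "a \<noteq> b"
    and "ballot Q' b = (ballot Q' a)\<inverse>" "strict_weak_order (cands Q') (ballot Q' a)"
  shows "neutral_extension Q Q'"
proof -
  let ?Q = "remove_voters Q' {a, b}"
  have "Q' = (insert a (insert b (voters ?Q)), cands ?Q, (ballot ?Q)(a := ballot Q' a, b := (ballot Q' a)\<inverse>))"
    using assms(2-5) by (intro profile_eqI) (auto simp: fun_eq_iff)
  then show ?thesis using add_reversed_pair[OF assms(1), of a b "ballot Q' a"] assms(4,6) by simp
qed

lemma neutral_extensionI:
  assumes Q: "is_profile Q"
    and "is_profile Q'" "cands Q' = cands Q" "voters Q \<subseteq> voters Q'"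
    and "\<And>v. v \<in> voters Q \<Longrightarrow> ballot Q' v = ballot Q v"
    and "inj_on p A" "A \<inter> p ` A = {}" "A \<union> p ` A \<subseteq> voters Q' - voters Q"
    and "\<And>a. a \<in> A \<Longrightarrow> ballot Q' (p a) = (ballot Q' a)\<inverse>"
    and "\<And>u. u \<in> voters Q' - voters Q - A - p ` A \<Longrightarrow> ballot Q' u = {}"
  shows "neutral_extension Q Q'"
  using assms(2-)
proof (induction "card (voters Q' - voters Q)" arbitrary: Q' A rule: less_induct)
  case less
  note Q' = less.prems(1) and cands = less.prems(2) and sub = less.prems(3) and old = less.prems(4)
    and p = less.prems(5-7) and conv = less.prems(8) and abstain = less.prems(9)
  define W where "W = voters Q' - voters Q"
  have smaller: "card (voters (remove_voters Q' D) - voters Q) < card (voters Q' - voters Q)"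
    if "D \<subseteq> W" "D \<noteq> {}" for D
    using that is_profileD(1)[OF Q'] unfolding W_def by (intro psubset_card_mono) auto
  have profile: "is_profile (remove_voters Q' D)" if "D \<subseteq> W" for D
    using is_profile_remove_voters[OF Q'] that sub is_profileD(2)[OF Q] unfolding W_def by blast
  consider (empty) "W = {}" | (abstainer) e where "e \<in> W - A - p ` A" | (pair) a where "a \<in> A"
    by blast
  then show ?case
  proof cases
    case empty
    have "ballot Q' v = ballot Q v" for v
      using old[of v] is_profileD(6)[OF Q', of v] is_profileD(6)[OF Q, of v] empty
      unfolding W_def by blast
    then have "Q' = Q" using empty sub cands unfolding W_def by (intro profile_eqI) auto
    then show ?thesis by (simp add: neutral_extension_refl)
  next
    case abstainer
    then have e: "{e} \<subseteq> W" "e \<notin> A \<union> p ` A" by auto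
    have ext: "neutral_extension Q (remove_voters Q' {e})"
      by (rule less.hyps[OF smaller[OF e(1)] profile[OF e(1)], of A])
        (use e cands sub old p conv abstain in \<open>auto simp: W_def\<close>)
    show ?thesis by (rule readd_abstainer[OF ext]) (use e abstain in \<open>auto simp: W_def\<close>)
  next
    case pair
    then have a: "{a, p a} \<subseteq> W" "a \<noteq> p a" using p unfolding W_def by auto
    have img: "p ` (A - {a}) = p ` A - {p a}" using p(1) pair by (auto simp: inj_on_def)
    have ext: "neutral_extension Q (remove_voters Q' {a, p a})"
    proof (rule less.hyps[OF smaller[OF a(1)] profile[OF a(1)], of "A - {a}"])
      show "inj_on p (A - {a})" using p(1) by (rule inj_on_subset) auto
    qed (use a img cands sub old p pair conv abstain in \<open>auto simp: W_def\<close>)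
    show ?thesis
      by (rule readd_reversed_pair[OF ext]) (use a conv[OF pair] is_profileD(5)[OF Q'] in \<open>auto simp: W_def\<close>)
  qed
qed

lemma neutral_extension_add_pairs:
  assumes Q: "is_profile Q" and W: "finite W" "W \<inter> voters Q = {}"
    and p: "inj_on p A" "A \<inter> p ` A = {}" "A \<union> p ` A \<subseteq> W"
    and T: "\<And>a. a \<in> A \<Longrightarrow> strict_weak_order (cands Q) (T a)"
  shows "neutral_extension Q (voters Q \<union> W, cands Q,
    \<lambda>u. if u \<in> A then T u else if u \<in> p ` A then (T (inv_into A p u))\<inverse> else ballot Q u)"
    (is "neutral_extension Q ?Q'")
proof (rule neutral_extensionI[OF Q, where p = p and A = A])
  have "strict_weak_order (cands Q) (ballot Q v)" for v
    by (cases "v \<in> voters Q") (simp_all add: is_profileD(5,6)[OF Q])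
  then show "is_profile ?Q'"
    using is_profileD(1-4,6)[OF Q] W p T strict_weak_order_converse[OF T] by (auto simp: is_profile_def)
  show "\<And>a. a \<in> A \<Longrightarrow> ballot ?Q' (p a) = (ballot ?Q' a)\<inverse>"
    using p by auto
qed (use W p is_profileD(6)[OF Q] in auto)

lemma mirroring_extension:
  assumes inf: "infinite (UNIV :: 'v set)" and S: "is_profile S" and P: "is_profile P"
    and disj: "voters P \<inter> voters S = {}" and xy: "x \<in> cands S" "y \<in> cands S" "x \<noteq> y"
  obtains S' :: "('v, 'c) profile" where "neutral_extension S S'" "voters P \<subseteq> voters S'"
    "\<And>v. v \<in> voters P \<Longrightarrow> Restr (ballot S' v) {x, y} = Restr (ballot P v) {x, y}"
proof -
  let ?V = "voters P" and ?X = "cands S"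
  define T where "T v = (if (x, y) \<in> ballot P v then top_ballot ?X x
    else if (y, x) \<in> ballot P v then top_ballot ?X y else {})" for v
  have swo_T: "strict_weak_order ?X (T v)" for v
    unfolding T_def by (simp add: strict_weak_order_top_ballot)
  obtain p :: "'v \<Rightarrow> 'v" where p: "inj_on p ?V" "p ` ?V \<inter> (voters S \<union> ?V) = {}"
    using obtain_fresh_injection[OF inf, of "voters S \<union> ?V" ?V] is_profileD(1)[OF S] is_profileD(1)[OF P]
    by blast
  define S' where "S' = (voters S \<union> (?V \<union> p ` ?V), ?X,
    \<lambda>u. if u \<in> ?V then T u else if u \<in> p ` ?V then (T (inv_into ?V p u))\<inverse> else ballot S u)"
  have "neutral_extension S S'"
    unfolding S'_def using p disj is_profileD(1)[OF P] swo_T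
    by (intro neutral_extension_add_pairs[OF S]) auto
  moreover have "voters P \<subseteq> voters S'" unfolding S'_def by auto
  moreover have "Restr (ballot S' v) {x, y} = Restr (ballot P v) {x, y}" if "v \<in> ?V" for v
  proof (rule Restr_pair_eqI[OF _ is_profileD(5)[OF P that]])
    show "strict_weak_order ?X (ballot S' v)" using swo_T that unfolding S'_def by simp
    show "(x, y) \<in> ballot S' v \<longleftrightarrow> (x, y) \<in> ballot P v" "(y, x) \<in> ballot S' v \<longleftrightarrow> (y, x) \<in> ballot P v"
      using that xy strict_weak_order_asym[OF is_profileD(5)[OF P that]]
      by (auto simp: S'_def T_def top_ballot_iff)
  qed
  ultimately show thesis by (rule that)
qed

lemma new_voters_balanced:
  assumes P: "is_profile P" and S: "is_profile S" and sub: "voters P \<subseteq> voters S"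
    and agree: "\<And>v. v \<in> voters P \<Longrightarrow> Restr (ballot S v) {x, y} = Restr (ballot P v) {x, y}"
    and margin_xy: "margin S x y = margin P x y"
  shows "card {u \<in> voters S - voters P. (x, y) \<in> ballot S u} = card {u \<in> voters S - voters P. (y, x) \<in> ballot S u}"
proof -
  define W where "W = voters S - voters P"
  have finS: "finite (voters S)" and finW: "finite W" using is_profileD(1)[OF S] unfolding W_def by auto
  have "(\<Sum>v\<in>voters P. ballot_margin (ballot S v) x y) = margin P x y"
  proof -
    have "ballot_margin (ballot S v) x y = ballot_margin (ballot P v) x y" if "v \<in> voters P" for v
      by (metis agree[OF that] ballot_margin_Restr insertI1 insertI2 singletonI)
    then show ?thesis by (simp add: margin_eq_sum[OF is_profileD(1)[OF P]])
  qed
  moreover have "(\<Sum>u\<in>W. ballot_margin (ballot S u) x y) =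
      int (card {u \<in> W. (x, y) \<in> ballot S u}) - int (card {u \<in> W. (y, x) \<in> ballot S u})"
    using finW unfolding ballot_margin_def by (simp add: sum_subtractf Collect_conj_eq Int_commute)
  moreover have "margin S x y = (\<Sum>u\<in>W. ballot_margin (ballot S u) x y) + (\<Sum>v\<in>voters P. ballot_margin (ballot S v) x y)"
    unfolding W_def margin_eq_sum[OF finS] by (rule sum.subset_diff[OF sub finS])
  ultimately show ?thesis using margin_xy unfolding W_def by simp
qed

lemma balanced_extension:
  assumes P: "is_profile P" and S: "is_profile S" and sub: "voters P \<subseteq> voters S"
    and X: "cands S \<subseteq> cands P" and xy: "x \<in> cands S" "y \<in> cands S" "x \<noteq> y"
    and agree: "\<And>v. v \<in> voters P \<Longrightarrow> Restr (ballot S v) {x, y} = Restr (ballot P v) {x, y}"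
    and margin_xy: "margin S x y = margin P x y"
  obtains P' where "neutral_extension P P'" "restrict_profile P' {x, y} = restrict_profile S {x, y}"
proof -
  define W where "W = voters S - voters P"
  define AF where "AF = {u \<in> W. (x, y) \<in> ballot S u}"
  define AB where "AB = {u \<in> W. (y, x) \<in> ballot S u}"
  have finW: "finite W" using is_profileD(1)[OF S] unfolding W_def by simp
  have AF_AB: "AF \<inter> AB = {}" "AF \<union> AB \<subseteq> W"
    using strict_weak_order_asym[OF is_profileD(5)[OF S]] unfolding AF_def AB_def W_def by auto
  have "finite AF" "finite AB" using finW AF_AB(2) by (auto intro: finite_subset)
  moreover have "card AF = card AB"
    using new_voters_balanced[OF P S sub agree margin_xy] unfolding AF_def AB_def W_def .
  ultimately obtain q where "bij_betw q AF AB" using finite_same_card_bij by blast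
  then have q: "inj_on q AF" "q ` AF = AB" by (auto simp: bij_betw_def)
  define R where "R = top_ballot (cands P) x"
  define P' where "P' = (voters P \<union> W, cands P, \<lambda>u. if u \<in> AF then R else if u \<in> AB then R\<inverse> else ballot P u)"
  have "neutral_extension P (voters P \<union> W, cands P,
      \<lambda>u. if u \<in> AF then R else if u \<in> q ` AF then R\<inverse> else ballot P u)"
    by (rule neutral_extension_add_pairs[OF P finW, of q AF "\<lambda>_. R"])
      (use q AF_AB in \<open>auto simp: W_def R_def strict_weak_order_top_ballot\<close>)
  then have "neutral_extension P P'" unfolding P'_def q(2) .
  moreover have "Restr (ballot P' u) {x, y} = Restr (ballot S u) {x, y}" for u
  proof (cases "u \<in> voters P")
    case True
    then have "u \<notin> AF" "u \<notin> AB" unfolding AF_def AB_def W_def by auto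
    with agree[OF True] show ?thesis unfolding P'_def by simp
  next
    case False
    have "(x, y) \<in> ballot P' u \<longleftrightarrow> u \<in> AF" "(y, x) \<in> ballot P' u \<longleftrightarrow> u \<in> AB"
      using False AF_AB(1) xy X is_profileD(6)[OF P False] unfolding P'_def R_def
      by (auto simp: top_ballot_iff)
    moreover have "(x, y) \<in> ballot S u \<longleftrightarrow> u \<in> AF" "(y, x) \<in> ballot S u \<longleftrightarrow> u \<in> AB"
      using False is_profileD(6)[OF S] unfolding AF_def AB_def W_def by auto
    moreover have "strict_weak_order (cands P) (ballot P' u)"
      using is_profileD(6)[OF P False] unfolding P'_def R_def
      by (simp add: strict_weak_order_top_ballot strict_weak_order_converse)
    moreover have "strict_weak_order (cands S) (ballot S u)"
      using is_profileD(5,6)[OF S] by (cases "u \<in> voters S") simp_all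
    ultimately show ?thesis by (intro Restr_pair_eqI) simp_all
  qed
  then have "restrict_profile P' {x, y} = restrict_profile S {x, y}"
    using xy X sub unfolding restrict_profile_def P'_def W_def by (auto simp: fun_eq_iff)
  ultimately show thesis by (rule that)
qed

lemma coherent_IIA_transfer:
  assumes inf: "infinite (UNIV :: 'v set)"
    and ni: "neutral_indifference f" and nr: "neutral_reversal f" and ci: "coherent_IIA f"
    and P: "is_profile P" and S: "is_profile S" and disj: "voters P \<inter> voters S = {}"
    and X: "cands S \<subseteq> cands P" and xy: "x \<in> cands S" "y \<in> cands S" "x \<noteq> y"
    and margin_xy: "margin S x y = margin P x y"
    and dominated: "\<And>a b. a \<in> cands S \<Longrightarrow> b \<in> cands S \<Longrightarrow> 0 < margin S a b \<Longrightarrow> margin S a b \<le> margin P a b"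
    and fP: "(x, y) \<in> f (P :: ('v, 'c) profile)"
  shows "(x, y) \<in> f S"
proof -
  obtain S' where ext_S: "neutral_extension S S'" and sub: "voters P \<subseteq> voters S'"
    and agree: "\<And>v. v \<in> voters P \<Longrightarrow> Restr (ballot S' v) {x, y} = Restr (ballot P v) {x, y}"
    using mirroring_extension[OF inf S P disj xy] by blast
  have S': "is_profile S'" using neutral_extension_is_profile[OF ext_S S] .
  have S'_cands: "cands S' = cands S" using neutral_extension_cands[OF ext_S] .
  have S'_margin: "margin S' = margin S" using margin_neutral_extension[OF S ext_S] .
  have S'_xy: "cands S' \<subseteq> cands P" "x \<in> cands S'" "y \<in> cands S'" "margin S' x y = margin P x y"
    using X xy margin_xy by (simp_all add: S'_cands S'_margin)
  obtain P' where ext_P: "neutral_extension P P'"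
    and restr: "restrict_profile P' {x, y} = restrict_profile S' {x, y}"
    using balanced_extension[OF P S' sub S'_xy(1-3) xy(3) agree S'_xy(4)] by blast
  have P': "is_profile P'" using neutral_extension_is_profile[OF ext_P P] .
  have P'_cands: "cands P' = cands P" using neutral_extension_cands[OF ext_P] .
  have P'_margin: "margin P' = margin P" using margin_neutral_extension[OF P ext_P] .
  have "coherent_step P' x y S'"
    unfolding coherent_step_def
  proof (intro conjI ballI impI)
    fix a b assume ab: "a \<in> cands S'" "b \<in> cands S'" "0 < margin S' a b"
    then show "margin S' a b \<le> margin P' a b" "0 < margin P' a b"
      using dominated[of a b] by (auto simp: S'_cands S'_margin P'_margin)
    show "margin S' a b = margin P' a b" if "{a, b} = {x, y}"
    proof -
      have "a \<in> {x, y}" "b \<in> {x, y}" using that by blast+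
      then show ?thesis using margin_eq_if_restrict_eq[OF restr] by metis
    qed
  qed (use restr X xy in \<open>auto simp: S'_cands P'_cands\<close>)
  moreover have "(x, y) \<in> f P'" using fP f_neutral_extension[OF ni nr P ext_P] by simp
  ultimately have "(x, y) \<in> f S'" using ci P' S' unfolding coherent_IIA_def by blast
  then show ?thesis using f_neutral_extension[OF ni nr S ext_S] by simp
qed

section \<open>Profiles whose majority graph is a cycle\<close>

definition indexed_profile :: "('i \<Rightarrow> 'v) \<Rightarrow> 'i set \<Rightarrow> 'c set \<Rightarrow> ('i \<Rightarrow> 'c rel) \<Rightarrow> ('v, 'c) profile" where
  "indexed_profile g I X B = (g ` I, X, \<lambda>u. if u \<in> g ` I then B (inv_into I g u) else {})"

lemma ballot_indexed_profile:
  "inj_on g I \<Longrightarrow> i \<in> I \<Longrightarrow> ballot (indexed_profile g I X B) (g i) = B i"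
  by (simp add: indexed_profile_def)

lemma is_profile_indexed_profile:
  assumes "finite I" "I \<noteq> {}" "finite X" "X \<noteq> {}" "\<And>i. i \<in> I \<Longrightarrow> strict_weak_order X (B i)"
  shows "is_profile (indexed_profile g I X B)"
  using assms inv_into_into[of _ g I] unfolding is_profile_def indexed_profile_def by auto

lemma margin_indexed_profile:
  assumes "inj_on g I" "finite I"
  shows "margin (indexed_profile g I X B) a b = (\<Sum>i\<in>I. ballot_margin (B i) a b)"
proof -
  have "margin (indexed_profile g I X B) a b = (\<Sum>u\<in>g ` I. ballot_margin (ballot (indexed_profile g I X B) u) a b)"
    using assms(2) by (simp add: margin_eq_sum indexed_profile_def)
  also have "\<dots> = (\<Sum>i\<in>I. ballot_margin (B i) a b)"
    using assms(1) by (simp add: sum.reindex ballot_indexed_profile)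
  finally show ?thesis .
qed

lemma indexed_profile_symmetry:
  assumes g: "inj_on g I" and \<rho>: "bij_betw \<rho> I I"
    and B: "\<And>i. i \<in> I \<Longrightarrow> B (\<rho> i) = map_prod \<pi> \<pi> ` B i"
  obtains \<sigma> where "bij_betw \<sigma> (voters (indexed_profile g I X B)) (voters (indexed_profile g I X B))"
    "\<And>v. v \<in> voters (indexed_profile g I X B) \<Longrightarrow>
      ballot (indexed_profile g I X B) (\<sigma> v) = map_prod \<pi> \<pi> ` ballot (indexed_profile g I X B) v"
proof
  have "bij_betw g I (g ` I)" using g by (rule inj_on_imp_bij_betw)
  then show "bij_betw (g \<circ> \<rho> \<circ> inv_into I g) (voters (indexed_profile g I X B)) (voters (indexed_profile g I X B))"
    unfolding indexed_profile_def
    by (auto intro: bij_betw_trans bij_betw_inv_into \<rho>)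
  fix v assume "v \<in> voters (indexed_profile g I X B)"
  then obtain i where "i \<in> I" "v = g i" unfolding indexed_profile_def by auto
  then show "ballot (indexed_profile g I X B) ((g \<circ> \<rho> \<circ> inv_into I g) v) = map_prod \<pi> \<pi> ` ballot (indexed_profile g I X B) v"
    using g B bij_betw_apply[OF \<rho>] by (simp add: ballot_indexed_profile)
qed

(* Together, the ballots "a > b > rest" (k = True) and "rest > a ~ b" (k = False) contribute one
   unit of margin to a over b and nothing to any other pair of candidates. *)
definition edge_score :: "'c \<Rightarrow> 'c \<Rightarrow> bool \<Rightarrow> 'c \<Rightarrow> int" where
  "edge_score a b k z = (if k then (if z = a then 2 else if z = b then 1 else 0) else of_bool (z \<noteq> a \<and> z \<noteq> b))"

definition edge_ballot :: "'c set \<Rightarrow> 'c \<Rightarrow> 'c \<Rightarrow> bool \<Rightarrow> 'c rel" where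
  "edge_ballot X a b k = score_ballot X (edge_score a b k)"

lemma edge_ballot_margin:
  assumes "a \<noteq> b" "a \<in> X" "b \<in> X" "u \<in> X" "w \<in> X"
  shows "(\<Sum>k\<in>UNIV. ballot_margin (edge_ballot X a b k) u w) = of_bool (u = a \<and> w = b) - of_bool (u = b \<and> w = a)"
  using assms by (auto simp: UNIV_bool edge_ballot_def edge_score_def score_ballot_def ballot_margin_def)

lemma map_prod_edge_ballot:
  assumes \<pi>: "bij_betw \<pi> X X" and "a \<in> X" "b \<in> X"
  shows "map_prod \<pi> \<pi> ` edge_ballot X a b k = edge_ballot X (\<pi> a) (\<pi> b) k"
  unfolding edge_ballot_def
proof (rule map_prod_score_ballot[OF \<pi>])
  fix z assume "z \<in> X"
  with assms have "\<pi> z = \<pi> a \<longleftrightarrow> z = a" "\<pi> z = \<pi> b \<longleftrightarrow> z = b"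
    by (metis bij_betw_iff_bijections)+
  then show "edge_score (\<pi> a) (\<pi> b) k (\<pi> z) = edge_score a b k z" by (simp add: edge_score_def)
qed

definition cycle_profile :: "(nat \<times> 'c \<times> bool \<Rightarrow> 'v) \<Rightarrow> nat \<Rightarrow> 'c set \<Rightarrow> ('c \<Rightarrow> 'c) \<Rightarrow> ('v, 'c) profile" where
  "cycle_profile g m C \<pi> = indexed_profile g ({..<m} \<times> C \<times> UNIV) C (\<lambda>(d, a, k). edge_ballot C a (\<pi> a) k)"

lemma is_profile_cycle_profile:
  assumes "finite C" "C \<noteq> {}" "0 < m"
  shows "is_profile (cycle_profile g m C \<pi>)"
  unfolding cycle_profile_def
proof (rule is_profile_indexed_profile)
  show "{..<m} \<times> C \<times> UNIV \<noteq> {}" using assms by auto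
  show "strict_weak_order C ((\<lambda>(d, a, k). edge_ballot C a (\<pi> a) k) i)" for i
    by (simp add: edge_ballot_def strict_weak_order_score_ballot split: prod.split)
qed (use assms in auto)

lemma margin_cycle_profile:
  assumes g: "inj_on g ({..<m} \<times> C \<times> UNIV)" and C: "finite C"
    and \<pi>: "\<And>a. a \<in> C \<Longrightarrow> \<pi> a \<in> C \<and> \<pi> a \<noteq> a" and uw: "u \<in> C" "w \<in> C"
  shows "margin (cycle_profile g m C \<pi>) u w = int m * (of_bool (w = \<pi> u) - of_bool (u = \<pi> w))"
proof -
  have finite_I: "finite ({..<m} \<times> C \<times> (UNIV :: bool set))" using C by simp
  have "margin (cycle_profile g m C \<pi>) u w =
      (\<Sum>d<m. \<Sum>a\<in>C. \<Sum>k\<in>UNIV. ballot_margin (edge_ballot C a (\<pi> a) k) u w)"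
    using C unfolding cycle_profile_def margin_indexed_profile[OF g finite_I] sum.cartesian_product' by simp
  also have "\<dots> = (\<Sum>d<m. \<Sum>a\<in>C. of_bool (u = a \<and> w = \<pi> a) - of_bool (u = \<pi> a \<and> w = a))"
  proof (rule sum.cong[OF refl], rule sum.cong[OF refl])
    fix a assume a: "a \<in> C"
    then have "a \<noteq> \<pi> a" "\<pi> a \<in> C" using \<pi>[OF a] by auto
    with a uw show "(\<Sum>k\<in>UNIV. ballot_margin (edge_ballot C a (\<pi> a) k) u w) =
        of_bool (u = a \<and> w = \<pi> a) - of_bool (u = \<pi> a \<and> w = a)"
      by (intro edge_ballot_margin)
  qed
  also have "\<dots> = (\<Sum>d<m. of_bool (w = \<pi> u) - of_bool (u = \<pi> w))"
  proof (rule sum.cong[OF refl])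
    have "(\<Sum>a\<in>C. of_bool (u = a \<and> w = \<pi> a) :: int) = (\<Sum>a\<in>C. if a = u then of_bool (w = \<pi> u) else 0)"
      by (rule sum.cong) auto
    also have "\<dots> = of_bool (w = \<pi> u)" using C uw by simp
    moreover have "(\<Sum>a\<in>C. of_bool (u = \<pi> a \<and> w = a) :: int) = (\<Sum>a\<in>C. if a = w then of_bool (u = \<pi> w) else 0)"
      by (rule sum.cong) auto
    moreover have "\<dots> = of_bool (u = \<pi> w)" using C uw by simp
    ultimately show "(\<Sum>a\<in>C. of_bool (u = a \<and> w = \<pi> a) - of_bool (u = \<pi> a \<and> w = a)) =
        (of_bool (w = \<pi> u) - of_bool (u = \<pi> w) :: int)"
      by (simp only: sum_subtractf)
  qed
  finally show ?thesis by simp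
qed

lemma cycle_profile_symmetry:
  assumes g: "inj_on g ({..<m} \<times> C \<times> UNIV)" and \<pi>: "bij_betw \<pi> C C"
  obtains \<sigma> where "bij_betw \<sigma> (voters (cycle_profile g m C \<pi>)) (voters (cycle_profile g m C \<pi>))"
    "\<And>v. v \<in> voters (cycle_profile g m C \<pi>) \<Longrightarrow>
      ballot (cycle_profile g m C \<pi>) (\<sigma> v) = map_prod \<pi> \<pi> ` ballot (cycle_profile g m C \<pi>) v"
proof -
  let ?\<rho> = "map_prod id (map_prod \<pi> id) :: nat \<times> _ \<times> bool \<Rightarrow> _"
  have "bij_betw ?\<rho> ({..<m} \<times> C \<times> UNIV) ({..<m} \<times> C \<times> UNIV)"
    by (intro bij_betw_map_prod bij_betw_id \<pi>)
  moreover have "(\<lambda>(d, a, k). edge_ballot C a (\<pi> a) k) (?\<rho> i) =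
      map_prod \<pi> \<pi> ` (\<lambda>(d, a, k). edge_ballot C a (\<pi> a) k) i" if i: "i \<in> {..<m} \<times> C \<times> UNIV" for i
  proof -
    obtain d a k where "i = (d, a, k)" "a \<in> C" using i by auto
    then show ?thesis using map_prod_edge_ballot[OF \<pi> \<open>a \<in> C\<close> bij_betw_apply[OF \<pi> \<open>a \<in> C\<close>]] by simp
  qed
  ultimately show thesis
    using indexed_profile_symmetry[OF g] that unfolding cycle_profile_def by blast
qed

section \<open>Strong cycles through a defeat\<close>

lemma rtrancl_path_iff_successively:
  "rtrancl_path r x xs y \<longleftrightarrow> successively r (x # xs) \<and> last (x # xs) = y"
proof (induction xs arbitrary: x)
  case Nil
  then show ?case by (auto elim: rtrancl_path.cases intro: rtrancl_path.base)
next
  case (Cons z zs)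
  then show ?case by (auto elim: rtrancl_path.cases intro: rtrancl_path.step)
qed

lemma successively_of_path_strength:
  assumes "m \<le> path_strength P xs"
  shows "successively (\<lambda>a b. m \<le> margin P a b) xs"
  unfolding successively_conv_nth
proof (intro allI impI)
  fix i assume "Suc i < length xs"
  moreover have "finite {i. Suc i < length xs}" by (rule finite_subset[of _ "{..<length xs}"]) auto
  ultimately have "path_strength P xs \<le> margin P (xs ! i) (xs ! Suc i)"
    unfolding path_strength_def by (intro Min_le) auto
  with assms show "m \<le> margin P (xs ! i) (xs ! Suc i)" by simp
qed

lemma cycle_of_list_funpow_nth:
  assumes "distinct cs" "i < length cs"
  shows "(cycle_of_list cs ^^ k) (cs ! i) = cs ! ((k + i) mod length cs)"
  using cyclic_rotation[OF assms(1), of k] nth_rotate[OF assms(2), of k] assms(2) by (metis nth_map)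

lemma cycle_of_list_nth:
  "distinct cs \<Longrightarrow> i < length cs \<Longrightarrow> cycle_of_list cs (cs ! i) = cs ! (Suc i mod length cs)"
  using cycle_of_list_funpow_nth[of cs i 1] by simp

lemma cycle_of_list_orbit:
  assumes "distinct cs" "a \<in> set cs" "c \<in> set cs"
  shows "\<exists>k. c = (cycle_of_list cs ^^ k) a"
proof -
  obtain i j where ij: "i < length cs" "a = cs ! i" "j < length cs" "c = cs ! j"
    using assms(2,3) by (auto simp: in_set_conv_nth)
  have "(j + length cs - i + i) mod length cs = j" using ij(1,3) by simp
  then have "c = (cycle_of_list cs ^^ (j + length cs - i)) a"
    using cycle_of_list_funpow_nth[OF assms(1) ij(1)] ij(2,4) by simp
  then show ?thesis ..
qed

lemma obtain_simple_strong_path: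
  assumes pos: "0 < margin P x y"
    and path: "majority_path P xs" "hd xs = y" "last xs = x" "margin P x y \<le> path_strength P xs"
  obtains cs where "distinct cs" "3 \<le> length cs" "hd cs = y" "last cs = x" "set cs \<subseteq> cands P"
    "successively (\<lambda>a b. margin P x y \<le> margin P a b) cs"
proof -
  define E where "E a b \<longleftrightarrow> margin P x y \<le> margin P a b" for a b
  have "successively E xs" unfolding E_def using path(4) by (rule successively_of_path_strength)
  moreover obtain ps where xs: "xs = y # ps"
    using path(1,2) unfolding majority_path_def by (cases xs) auto
  ultimately have "rtrancl_path E y ps x" using path(3) by (simp add: rtrancl_path_iff_successively)
  then obtain ps' where "rtrancl_path E y ps' x" and dist: "distinct (y # ps')" and "set ps' \<subseteq> set ps"
    by (rule rtrancl_path_distinct)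
  then have cs: "successively E (y # ps')" "last (y # ps') = x" "set (y # ps') \<subseteq> cands P"
    using path(1) unfolding xs rtrancl_path_iff_successively majority_path_def by auto
  have "x \<noteq> y" using pos by (auto simp: margin_def)
  then obtain z zs where ps': "ps' = z # zs" using cs(2) by (cases ps') auto
  have "zs \<noteq> []"
  proof
    assume "zs = []"
    then have "E y x" using cs(1,2) ps' by simp
    with pos show False unfolding E_def by (simp add: margin_antisym[of P y x])
  qed
  then have "3 \<le> length (y # ps')" using ps' by (cases zs) auto
  with dist cs show thesis unfolding E_def by (intro that) simp_all
qed

lemma obtain_strong_cycle:
  assumes pos: "0 < margin P x y"
    and path: "majority_path P xs" "hd xs = y" "last xs = x" "margin P x y \<le> path_strength P xs"
  obtains C \<pi> where "finite C" "C \<subseteq> cands P" "bij_betw \<pi> C C" "x \<in> C" "\<pi> x = y" "\<pi> y \<noteq> x"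
    "\<And>c. c \<in> C \<Longrightarrow> \<exists>k. c = (\<pi> ^^ k) x"
    "\<And>a. a \<in> C \<Longrightarrow> margin P x y \<le> margin P a (\<pi> a)"
proof -
  obtain cs where dist: "distinct cs" and len: "3 \<le> length cs" and ends: "hd cs = y" "last cs = x"
    and cands: "set cs \<subseteq> cands P" and strong: "successively (\<lambda>a b. margin P x y \<le> margin P a b) cs"
    using obtain_simple_strong_path[OF pos path] by blast
  define n where "n = length cs"
  have n: "3 \<le> n" "Suc (n - 1) = n" using len unfolding n_def by simp_all
  have "cs \<noteq> []" using len by auto
  then have y_nth: "cs ! 0 = y" and x_nth: "cs ! (n - 1) = x" and x: "x \<in> set cs"
    using ends last_in_set unfolding n_def by (auto simp: hd_conv_nth last_conv_nth)
  define \<pi> where "\<pi> = cycle_of_list cs"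
  have succ: "\<pi> (cs ! i) = cs ! (Suc i mod n)" if "i < n" for i
    using cycle_of_list_nth[OF dist] that unfolding \<pi>_def n_def by simp
  show thesis
  proof
    show "finite (set cs)" "set cs \<subseteq> cands P" "x \<in> set cs" using cands x by auto
    show "bij_betw \<pi> (set cs) (set cs)" unfolding \<pi>_def by (rule permutes_imp_bij[OF cycle_permutes])
    show "\<pi> x = y" using succ[of "n - 1"] n x_nth y_nth by simp
    have "\<pi> y = cs ! 1" using succ[of 0] n(1) y_nth by simp
    moreover have "cs ! 1 \<noteq> cs ! (n - 1)"
      using nth_eq_iff_index_eq[OF dist, of 1 "n - 1"] n(1) unfolding n_def by simp
    ultimately show "\<pi> y \<noteq> x" using x_nth by simp
    show "\<exists>k. c = (\<pi> ^^ k) x" if "c \<in> set cs" for c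
      using cycle_of_list_orbit[OF dist x that] unfolding \<pi>_def .
    show "margin P x y \<le> margin P a (\<pi> a)" if a: "a \<in> set cs" for a
    proof -
      obtain i where i: "i < n" "a = cs ! i" using a by (auto simp: n_def in_set_conv_nth)
      show ?thesis
      proof (cases "Suc i < n")
        case True
        then show ?thesis using successively_nth[OF strong, of i] succ[OF i(1)] i(2) unfolding n_def by simp
      next
        case False
        then have "i = n - 1" using i(1) by simp
        then show ?thesis using succ[OF i(1)] i(2) x_nth y_nth n by simp
      qed
    qed
  qed
qed

lemma defeat_not_on_strong_cycle:
  assumes inf: "infinite (UNIV :: 'v set)"
    and an: "anonymity f" and ne: "neutrality f" and av: "availability f"
    and ni: "neutral_indifference f" and nr: "neutral_reversal f" and ci: "coherent_IIA f"
    and P: "is_profile (P :: ('v, 'c) profile)" and fP: "(x, y) \<in> f P" and pos: "0 < margin P x y"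
    and C: "finite C" "C \<subseteq> cands P"
    and \<pi>: "bij_betw \<pi> C C" "x \<in> C" "\<pi> x = y" "\<pi> y \<noteq> x"
    and orbit: "\<And>c. c \<in> C \<Longrightarrow> \<exists>k. c = (\<pi> ^^ k) x"
    and strong: "\<And>a. a \<in> C \<Longrightarrow> margin P x y \<le> margin P a (\<pi> a)"
  shows False
proof -
  define m where "m = nat (margin P x y)"
  have m: "int m = margin P x y" "0 < m" using pos unfolding m_def by simp_all
  have \<pi>C: "\<pi> a \<in> C \<and> \<pi> a \<noteq> a" if "a \<in> C" for a
    using strong[OF that] pos bij_betw_apply[OF \<pi>(1) that] by (auto simp: margin_def)
  have xy: "y \<in> C" "x \<noteq> y" using \<pi>C[OF \<pi>(2)] \<pi>(3) by auto
  have "finite ({..<m} \<times> C \<times> (UNIV :: bool set))" using C(1) by simp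
  then obtain g :: "nat \<times> 'c \<times> bool \<Rightarrow> 'v"
    where g: "inj_on g ({..<m} \<times> C \<times> UNIV)" "g ` ({..<m} \<times> C \<times> UNIV) \<inter> voters P = {}"
    by (rule obtain_fresh_injection[OF inf is_profileD(1)[OF P]])
  define S where "S = cycle_profile g m C \<pi>"
  have S: "is_profile S" "cands S = C" "voters S = g ` ({..<m} \<times> C \<times> UNIV)"
    using is_profile_cycle_profile C(1) \<pi>(2) m(2)
    unfolding S_def by (auto simp: cycle_profile_def indexed_profile_def)
  have margin_S: "margin S a b = int m * (of_bool (b = \<pi> a) - of_bool (a = \<pi> b))" if "a \<in> C" "b \<in> C" for a b
    using margin_cycle_profile[OF g(1) C(1) \<pi>C that] unfolding S_def .
  have fS: "(x, y) \<in> f S"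
  proof (rule coherent_IIA_transfer[OF inf ni nr ci P S(1) _ _ _ _ xy(2) _ _ fP])
    show "margin S x y = margin P x y" using margin_S[OF \<pi>(2) xy(1)] \<pi>(3,4) m by simp
    show "margin S a b \<le> margin P a b" if "a \<in> cands S" "b \<in> cands S" "0 < margin S a b" for a b
      using that margin_S[of a b] strong[of a] m by (auto simp: S(2) split: if_splits)
  qed (use g(2) C(2) \<pi>(2) xy(1) in \<open>auto simp: S\<close>)
  obtain \<sigma> where \<sigma>: "bij_betw \<sigma> (voters S) (voters S)"
    and sym: "\<And>v. v \<in> voters S \<Longrightarrow> ballot S (\<sigma> v) = map_prod \<pi> \<pi> ` ballot S v"
    using cycle_profile_symmetry[OF g(1) \<pi>(1)] unfolding S_def by blast
  show False
    by (rule symmetric_cycle_violates_availability[OF an ne av S(1) _ \<sigma> sym])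
      (use \<pi>(1,2) orbit fS[folded \<pi>(3)] in \<open>simp_all add: S(2)\<close>)
qed

theorem theorem7p4:
  fixes f :: "('v, 'c) profile \<Rightarrow> 'c rel"
  assumes "infinite (UNIV :: 'v set)" and "infinite (UNIV :: 'c set)"
    and "is_vccr f"
    and "anonymity f" and "neutrality f" and "availability f"
    and "neutral_indifference f" and "monotonicity_two f"
    and "neutral_reversal f" and "coherent_IIA f"
    and "is_profile P"
  shows "f P \<subseteq> split_cycle P"
proof (rule subrelI)
  fix x y assume fP: "(x, y) \<in> f P"
  have xy: "x \<in> cands P \<and> y \<in> cands P" using is_vccrD(1)[OF assms(3,11) fP] .
  have pos: "0 < margin P x y" using defeat_implies_positive_margin[OF assms(3,4,5,8,10,11) fP] .
  show "(x, y) \<in> split_cycle P"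
  proof (rule ccontr)
    assume "(x, y) \<notin> split_cycle P"
    then obtain xs where "majority_path P xs" "hd xs = y" "last xs = x" "margin P x y \<le> path_strength P xs"
      using xy pos unfolding split_cycle_def by auto
    then show False
      by (rule obtain_strong_cycle[OF pos]) (rule defeat_not_on_strong_cycle[OF assms(1,4,5,6,7,9,10,11) fP pos])
  qed
qed

end
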